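(* Fix integers $m\ge 1$ and $n\ge 0$. Let $a=\{a_1,\dots,a_m\}$ and $a'=\{a'_1,\dots,a'_m\}$ be two sets of $m$ positive integers, all different from $1$, each of which is multiplicatively independent. Then $\chi_{\mathcal{A}_n(a)}(t)=\chi_{\mathcal{A}_n(a')}(t)$. That is, the characteristic polynomial of $\mathcal{A}_n(a)$ depends only on $m$ and $n$, as long as the $a_i$ are multiplicatively independent.
   Context: A set $\{a_1,\dots,a_m\}$ of positive rational numbers is multiplicatively independent if $a_1^{i_1}\cdots a_m^{i_m}=1$ with integers $i_1,\dots,i_m$ implies $i_1=\dots=i_m=0$. For a set $a=\{a_1,\dots,a_m\}$ of positive rational numbers different from $1$ and $n\ge 1$, $\mathcal{A}_n(a)$ denotes the hyperplane arrangement in $\mathbb{R}^n$ consisting of the hyperplanes $x_i=0$ ($1\le i\le n$), $x_i=x_j$ ($1\le i<j\le n$), and $x_i=a_rx_j$ ($1\le i\neq j\le n$, $1\le r\le m$); $\mathcal{A}_0(a)$ is the empty arrangement in $\mathbb{R}^0$, with characteristic polynomial $1$. For a finite arrangement $\mathcal{A}$ of affine hyperplanes in $\mathbb{R}^n$, the characteristic polynomial is $\chi_{\mathcal{A}}(t)=\sum_{\mathcal{B}}(-1)^{\#\mathcal{B}}t^{n-\operatorname{rank}(\mathcal{B})}$, the sum over subsets $\mathcal{B}\subseteq\mathcal{A}$ whose hyperplanes have nonempty common intersection, where $\operatorname{rank}(\mathcal{B})$ is the dimension of the span of the normal vectors of the hyperplanes in $\mathcal{B}$ (equivalently $\sum_{x\in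 L(\mathcal{A})}\mu(\hat 0,x)t^{\dim x}$ over the intersection poset). *)

theory Defs
  imports Complex_Main "HOL-Computational_Algebra.Polynomial"
begin

text \<open>Points of R^n are modelled as functions nat => real vanishing outside {..<n}.\<close>
definition Rn :: "nat \<Rightarrow> (nat \<Rightarrow> real) set" where
  "Rn n = {x. \<forall>i\<ge>n. x i = 0}"

definition hyperplane :: "nat \<Rightarrow> (nat \<Rightarrow> real) \<Rightarrow> real \<Rightarrow> (nat \<Rightarrow> real) set" where
  "hyperplane n c b = {x \<in> Rn n. (\<Sum>i<n. c i * x i) = b}"

text \<open>Normal vectors of a set B of hyperplanes (all nonzero scalings included; the span is the same).\<close>
definition normals :: "nat \<Rightarrow> (nat \<Rightarrow> real) set set \<Rightarrow> (nat \<Rightarrow> real) set" where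
  "normals n B = {c \<in> Rn n. (\<exists>i<n. c i \<noteq> 0) \<and> (\<exists>b. hyperplane n c b \<in> B)}"

definition lin_indep :: "nat \<Rightarrow> (nat \<Rightarrow> real) set \<Rightarrow> bool" where
  "lin_indep n T \<longleftrightarrow> finite T \<and>
     (\<forall>u :: (nat \<Rightarrow> real) \<Rightarrow> real. (\<forall>i<n. (\<Sum>v\<in>T. u v * v i) = 0) \<longrightarrow> (\<forall>v\<in>T. u v = 0))"

text \<open>rank = dimension of the span of the normal vectors = maximal size of an independent subset.\<close>
definition rank :: "nat \<Rightarrow> (nat \<Rightarrow> real) set set \<Rightarrow> nat" where
  "rank n B = Max {card T | T. T \<subseteq> normals n B \<and> lin_indep n T}"

definition char_poly :: "nat \<Rightarrow> (nat \<Rightarrow> real) set set \<Rightarrow> real poly" where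
  "char_poly n A = (\<Sum>B\<in>{B. B \<subseteq> A \<and> Rn n \<inter> \<Inter>B \<noteq> {}}.
      (-1) ^ card B * monom 1 (n - rank n B))"

definition unitv :: "nat \<Rightarrow> nat \<Rightarrow> real" where
  "unitv i = (\<lambda>k. if k = i then 1 else 0)"

definition arr :: "nat \<Rightarrow> real set \<Rightarrow> (nat \<Rightarrow> real) set set" where
  "arr n a =
     {hyperplane n (unitv i) 0 | i. i < n}
   \<union> {hyperplane n (\<lambda>k. unitv i k - unitv j k) 0 | i j. i < j \<and> j < n}
   \<union> {hyperplane n (\<lambda>k. unitv i k - r * unitv j k) 0 | i j r. i < n \<and> j < n \<and> i \<noteq> j \<and> r \<in> a}"

definition mult_indep :: "real set \<Rightarrow> bool" where
  "mult_indep S \<longleftrightarrow> (\<forall>e :: real \<Rightarrow> int. (\<Prod>r\<in>S. r powi e r) = 1 \<longrightarrow> (\<forall>r\<in>S. e r = 0))"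

end

theory Submission
  imports Defs
begin

text \<open>All hyperplanes of the arrangement pass through the origin, so its characteristic
  polynomial is a sum over all subarrangements; indexing hyperplanes by the equations
  x_i = r x_j (r \<in> {0, 1} \<union> a), a bijection s : a \<rightarrow> a' fixing 0 and 1 reindexes this sum, and
  it suffices that it preserves ranks.  The rank of a set of such equations is the largest
  size of a separated subset S, in which every equation fails at some point satisfying the
  rest of S.  Separating points can be transported: as a is multiplicatively independent, every
  nonzero real is uniquely rho * prod r^(e_r) with rho a fixed representative of its coset
  modulo the group generated by a, and replacing each r by s(r) yields a map psi with
  psi(r t) = s(r) psi(t).  Applied coordinatewise, psi sends solutions of x_i = r x_j to
  solutions of x_i = s(r) x_j, and after doubling psi on one coset it keeps the one
  distinguished equation violated.  Independence of a' gives the inverse transport.\<close>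

section \<open>Linear algebra in R^n\<close>

definition dot :: "nat \<Rightarrow> (nat \<Rightarrow> real) \<Rightarrow> (nat \<Rightarrow> real) \<Rightarrow> real" where
  "dot n c x = (\<Sum>k<n. c k * x k)"

lemma dot_diff_right: "dot n w (\<lambda>k. x k - a * y k) = dot n w x - a * dot n w y"
  unfolding dot_def by (simp add: algebra_simps sum_subtractf sum_distrib_left)

lemma dot_diff_left: "dot n (\<lambda>k. c k - a * v k) x = dot n c x - a * dot n v x"
  unfolding dot_def by (simp add: algebra_simps sum_subtractf sum_distrib_left)

lemma dot_scaled: "(\<forall>k. v k = \<kappa> * c k) \<Longrightarrow> dot n v x = \<kappa> * dot n c x"
  by (simp add: dot_def sum_distrib_left algebra_simps)

lemma dot_unitv_right: "k < n \<Longrightarrow> dot n c (unitv k) = c k"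
  unfolding dot_def unitv_def by (simp add: if_distrib cong: if_cong)

lemma dot_unitv_left: "k < n \<Longrightarrow> dot n (unitv k) x = x k"
  using dot_unitv_right[of k n x] by (simp add: dot_def mult.commute)

lemma zero_in_Rn [simp]: "(\<lambda>k. 0) \<in> Rn n"
  by (simp add: Rn_def)

lemma unitv_in_Rn: "k < n \<Longrightarrow> unitv k \<in> Rn n"
  by (simp add: Rn_def unitv_def)

lemma vanishes_on_kernel_after_projection:
  assumes x0: "x0 \<in> Rn n" "\<forall>w\<in>M. dot n w x0 = 0" "dot n v x0 \<noteq> 0"
    and c: "\<forall>x\<in>Rn n. (\<forall>w\<in>insert v M. dot n w x = 0) \<longrightarrow> dot n c x = 0"
    and x: "x \<in> Rn n" "\<forall>w\<in>M. dot n w x = 0"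
  shows "dot n (\<lambda>k. c k - (dot n c x0 / dot n v x0) * v k) x = 0"
proof -
  txt \<open>Projecting x along x0 lands in the kernel of insert v M.\<close>
  define z where "z = (\<lambda>k. x k - (dot n v x / dot n v x0) * x0 k)"
  have dot_z: "dot n w z = dot n w x - (dot n v x / dot n v x0) * dot n w x0" for w
    unfolding z_def by (rule dot_diff_right)
  have "z \<in> Rn n"
    using x(1) x0(1) by (auto simp: Rn_def z_def)
  moreover have "\<forall>w\<in>insert v M. dot n w z = 0"
    using x(2) x0 by (auto simp: dot_z)
  ultimately have "dot n c z = 0"
    using c by blast
  moreover have "dot n (\<lambda>k. c k - (dot n c x0 / dot n v x0) * v k) x
      = dot n c x - (dot n c x0 / dot n v x0) * dot n v x"
    by (rule dot_diff_left)
  ultimately show ?thesis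
    using x0(3) by (simp add: dot_z field_simps)
qed

lemma in_span_if_vanishes_on_common_kernel:
  assumes "finite M" "M \<subseteq> Rn n" "c \<in> Rn n"
    and "\<forall>x\<in>Rn n. (\<forall>w\<in>M. dot n w x = 0) \<longrightarrow> dot n c x = 0"
  shows "\<exists>u. \<forall>k. c k = (\<Sum>w\<in>M. u w * w k)"
  using assms
proof (induction M arbitrary: c rule: finite_induct)
  case empty
  have "c k = 0" for k
  proof (cases "k < n")
    case True
    then show ?thesis
      using empty.prems(3) unitv_in_Rn[OF True] dot_unitv_right[OF True, of c] by simp
  qed (use empty.prems(2) in \<open>simp add: Rn_def\<close>)
  then show ?case by simp
next
  case (insert v M)
  have sum_upd: "(\<Sum>w\<in>insert v M. (u(v := a)) w * w k) = a * v k + (\<Sum>w\<in>M. u w * w k)"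
    for u a k
    using insert.hyps by (auto intro!: sum.cong)
  show ?case
  proof (cases "\<forall>x\<in>Rn n. (\<forall>w\<in>M. dot n w x = 0) \<longrightarrow> dot n v x = 0")
    case True
    then obtain u where u: "\<forall>k. c k = (\<Sum>w\<in>M. u w * w k)"
      using insert.IH[of c] insert.prems by auto
    have "c k = (\<Sum>w\<in>insert v M. (u(v := 0)) w * w k)" for k
      using u sum_upd[of u 0 k] by simp
    then show ?thesis by blast
  next
    case False
    then obtain x0 where x0: "x0 \<in> Rn n" "\<forall>w\<in>M. dot n w x0 = 0" "dot n v x0 \<noteq> 0"
      by blast
    define \<kappa> where "\<kappa> = dot n c x0 / dot n v x0"
    have "\<forall>x\<in>Rn n. (\<forall>w\<in>M. dot n w x = 0) \<longrightarrow> dot n (\<lambda>k. c k - \<kappa> * v k) x = 0"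
      using vanishes_on_kernel_after_projection[OF x0 insert.prems(3)] by (simp add: \<kappa>_def)
    moreover have "(\<lambda>k. c k - \<kappa> * v k) \<in> Rn n"
      using insert.prems(1,2) by (auto simp: Rn_def)
    ultimately obtain u where u: "\<forall>k. c k - \<kappa> * v k = (\<Sum>w\<in>M. u w * w k)"
      using insert.IH insert.prems(1) by blast
    have "c k = (\<Sum>w\<in>insert v M. (u(v := \<kappa>)) w * w k)" for k
      using u sum_upd[of u \<kappa> k] by (simp add: algebra_simps)
    then show ?thesis by blast
  qed
qed

definition separated :: "nat \<Rightarrow> (nat \<Rightarrow> real) set \<Rightarrow> bool" where
  "separated n T \<longleftrightarrow> (\<forall>v\<in>T. \<exists>x\<in>Rn n. (\<forall>w\<in>T - {v}. dot n w x = 0) \<and> dot n v x \<noteq> 0)"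

lemma lin_indep_imp_separated:
  assumes "T \<subseteq> Rn n" "lin_indep n T"
  shows "separated n T"
  unfolding separated_def
proof (rule ballI, rule ccontr)
  fix v
  assume v: "v \<in> T"
    and "\<not> (\<exists>x\<in>Rn n. (\<forall>w\<in>T - {v}. dot n w x = 0) \<and> dot n v x \<noteq> 0)"
  moreover have fin: "finite T"
    using assms(2) by (simp add: lin_indep_def)
  ultimately obtain u where u: "\<forall>k. v k = (\<Sum>w\<in>T - {v}. u w * w k)"
    using in_span_if_vanishes_on_common_kernel[of "T - {v}" n v] assms(1) by blast
  define u' where "u' = u(v := -1)"
  have "(\<Sum>w\<in>T. u' w * w i) = 0" for i
  proof -
    have "(\<Sum>w\<in>T. u' w * w i) = u' v * v i + (\<Sum>w\<in>T - {v}. u w * w i)"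
      using fin v by (simp add: sum.remove u'_def)
    then show ?thesis
      using u by (simp add: u'_def)
  qed
  then have "u' v = 0"
    using assms(2) v unfolding lin_indep_def by blast
  then show False
    by (simp add: u'_def)
qed

lemma separated_imp_lin_indep:
  assumes "finite T" "separated n T"
  shows "lin_indep n T"
  unfolding lin_indep_def
proof (intro conjI assms allI impI ballI)
  fix u :: "(nat \<Rightarrow> real) \<Rightarrow> real" and v
  assume u: "\<forall>i<n. (\<Sum>w\<in>T. u w * w i) = 0" and v: "v \<in> T"
  obtain x where x: "\<forall>w\<in>T - {v}. dot n w x = 0" "dot n v x \<noteq> 0"
    using assms(2) v unfolding separated_def by blast
  have "0 = (\<Sum>i<n. x i * (\<Sum>w\<in>T. u w * w i))"
    using u by simp
  also have "\<dots> = (\<Sum>w\<in>T. u w * dot n w x)"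
    unfolding dot_def by (simp add: sum_distrib_left sum.swap[of _ T] algebra_simps)
  also have "\<dots> = u v * dot n v x + (\<Sum>w\<in>T - {v}. u w * dot n w x)"
    using assms(1) v by (simp add: sum.remove)
  also have "\<dots> = u v * dot n v x"
    using x(1) by simp
  finally show "u v = 0"
    using x(2) by simp
qed

lemma central_hyperplane_eq_imp_proportional:
  assumes "v \<in> Rn n" "c \<in> Rn n" "hyperplane n v b = hyperplane n c 0"
  shows "b = 0 \<and> (\<exists>\<kappa>. \<forall>k. v k = \<kappa> * c k)"
proof -
  have "(\<lambda>k. 0) \<in> hyperplane n v b"
    using assms(3) by (simp add: hyperplane_def)
  then have b: "b = 0"
    by (simp add: hyperplane_def)
  have "\<forall>x\<in>Rn n. (\<forall>w\<in>{c}. dot n w x = 0) \<longrightarrow> dot n v x = 0"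
    using assms(3) b by (auto simp: hyperplane_def dot_def set_eq_iff)
  then have "\<exists>u. \<forall>k. v k = (\<Sum>w\<in>{c}. u w * w k)"
    using in_span_if_vanishes_on_common_kernel[of "{c}" n v] assms(1,2) by blast
  then show ?thesis
    using b by auto
qed

section \<open>The hyperplanes x_i = r x_j\<close>

text \<open>The triple (i, j, r) encodes the equation x_i = r x_j; r = 0 gives the coordinate hyperplane
  x_i = 0 and r = 1 the hyperplane x_i = x_j.\<close>
definition satisfies :: "(nat \<Rightarrow> real) \<Rightarrow> nat \<times> nat \<times> real \<Rightarrow> bool" where
  "satisfies x = (\<lambda>(i, j, r). x i = r * x j)"

definition eqn_normal :: "nat \<times> nat \<times> real \<Rightarrow> nat \<Rightarrow> real" where
  "eqn_normal = (\<lambda>(i, j, r) k. unitv i k - r * unitv j k)"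

definition eqn_hyperplane :: "nat \<Rightarrow> nat \<times> nat \<times> real \<Rightarrow> (nat \<Rightarrow> real) set" where
  "eqn_hyperplane n p = hyperplane n (eqn_normal p) 0"

definition eqns :: "nat \<Rightarrow> real set \<Rightarrow> (nat \<times> nat \<times> real) set" where
  "eqns n A = {(i, j, r). i < n \<and> j < n \<and>
     ((i = j \<and> r = 0) \<or> (i < j \<and> r = 1) \<or> (i \<noteq> j \<and> r \<in> A))}"

lemma eqn_hyperplane_eq: "eqn_hyperplane n (i, j, r) = hyperplane n (\<lambda>k. unitv i k - r * unitv j k) 0"
  by (simp add: eqn_hyperplane_def eqn_normal_def)

lemma arr_eq_eqn_hyperplanes: "arr n A = eqn_hyperplane n ` eqns n A"
proof (intro equalityI subsetI)
  fix H
  assume "H \<in> arr n A"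
  then consider (coord) i where "i < n" "H = eqn_hyperplane n (i, i, 0)"
    | (diag) i j where "i < j" "j < n" "H = eqn_hyperplane n (i, j, 1)"
    | (scaled) i j r where "i < n" "j < n" "i \<noteq> j" "r \<in> A" "H = eqn_hyperplane n (i, j, r)"
    unfolding arr_def eqn_hyperplane_eq by auto
  then show "H \<in> eqn_hyperplane n ` eqns n A"
    by cases (auto simp: eqns_def)
next
  fix H
  assume "H \<in> eqn_hyperplane n ` eqns n A"
  then obtain i j r where ijr: "(i, j, r) \<in> eqns n A" and H: "H = eqn_hyperplane n (i, j, r)"
    by auto
  then consider "i < n" "i = j" "r = 0" | "i < j" "j < n" "r = 1" | "i < n" "j < n" "i \<noteq> j" "r \<in> A"
    by (auto simp: eqns_def)
  then show "H \<in> arr n A"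
  proof cases
    case 1
    then have "H = hyperplane n (unitv i) 0"
      using H by (simp add: eqn_hyperplane_eq)
    then show ?thesis
      using 1 unfolding arr_def by blast
  next
    case 2
    then have "H = hyperplane n (\<lambda>k. unitv i k - unitv j k) 0"
      using H by (simp add: eqn_hyperplane_eq)
    then show ?thesis
      using 2 unfolding arr_def by blast
  next
    case 3
    then show ?thesis
      using H unfolding arr_def eqn_hyperplane_eq by blast
  qed
qed

lemma eqns_bounds: "(i, j, r) \<in> eqns n A \<Longrightarrow> i < n \<and> j < n"
  by (simp add: eqns_def)

lemma eqn_normal_in_Rn: "p \<in> eqns n A \<Longrightarrow> eqn_normal p \<in> Rn n"
  by (auto simp: eqns_def Rn_def eqn_normal_def unitv_def)

lemma eqn_normal_first: "(i, j, r) \<in> eqns n A \<Longrightarrow> eqn_normal (i, j, r) i = 1"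
  by (auto simp: eqns_def eqn_normal_def unitv_def)

lemma dot_eqn_normal_eq_0_iff:
  assumes "p \<in> eqns n A"
  shows "dot n (eqn_normal p) x = 0 \<longleftrightarrow> satisfies x p"
proof -
  obtain i j r where p: "p = (i, j, r)" and ij: "i < n" "j < n"
    using assms by (cases p) (auto simp: eqns_def)
  have "dot n (eqn_normal p) x = dot n (unitv i) x - r * dot n (unitv j) x"
    unfolding p eqn_normal_def by (simp add: dot_diff_left)
  then show ?thesis
    using ij by (simp add: p satisfies_def dot_unitv_left)
qed

lemma eqn_normal_second: "i \<noteq> j \<Longrightarrow> eqn_normal (i, j, r) j = - r"
  by (simp add: eqn_normal_def unitv_def)

lemma eqn_normal_nonzero_iff:
  assumes "\<forall>r\<in>A. r > 1" "(i, j, r) \<in> eqns n A"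
  shows "eqn_normal (i, j, r) k \<noteq> 0 \<longleftrightarrow> k = i \<or> k = j"
  using assms by (auto simp: eqns_def eqn_normal_def unitv_def)

lemma ge_1_mult_eq_1_imp_eq_1:
  fixes r r' :: real
  assumes "r \<ge> 1" "r' \<ge> 1" "r * r' = 1"
  shows "r = 1 \<and> r' = 1"
proof -
  have "r \<le> r * r'" "r' \<le> r * r'"
    using assms(1,2) by (simp_all add: mult_le_cancel_left1 mult_le_cancel_right1)
  then show ?thesis
    using assms by linarith
qed

lemma proportional_eqn_normals_same_support:
  assumes A: "\<forall>r\<in>A. r > 1" and p: "(i, j, r) \<in> eqns n A" and q: "(i', j', r') \<in> eqns n A"
    and proportional: "\<forall>k. eqn_normal (i, j, r) k = \<kappa> * eqn_normal (i', j', r') k"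
  shows "{i, j} = {i', j'}"
proof -
  have "\<kappa> \<noteq> 0"
    using proportional eqn_normal_first[OF p] by (metis mult_zero_left zero_neq_one)
  then have "eqn_normal (i, j, r) k \<noteq> 0 \<longleftrightarrow> eqn_normal (i', j', r') k \<noteq> 0" for k
    using proportional by simp
  then have "(k = i \<or> k = j) \<longleftrightarrow> (k = i' \<or> k = j')" for k
    using eqn_normal_nonzero_iff[OF A p] eqn_normal_nonzero_iff[OF A q] by simp
  then show ?thesis
    by blast
qed

lemma proportional_eqn_normals_imp_eq:
  assumes A: "\<forall>r\<in>A. r > 1" and p: "p \<in> eqns n A" and q: "q \<in> eqns n A"
    and proportional: "\<forall>k. eqn_normal p k = \<kappa> * eqn_normal q k"
  shows "p = q"
proof -
  obtain i j r where pp: "p = (i, j, r)" by (cases p)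
  obtain i' j' r' where qq: "q = (i', j', r')" by (cases q)
  have at_i: "1 = \<kappa> * eqn_normal q i"
    using proportional eqn_normal_first[OF p[unfolded pp]] unfolding pp by metis
  have same_support: "{i, j} = {i', j'}"
    using proportional_eqn_normals_same_support[OF A p[unfolded pp] q[unfolded qq]]
      proportional unfolding pp qq by blast
  show ?thesis
  proof (cases "i = j")
    case True
    then show ?thesis
      using same_support p q by (auto simp: pp qq eqns_def doubleton_eq_iff)
  next
    case False
    then have r: "r \<ge> 1" "r' \<ge> 1"
      using p q A same_support by (auto simp: pp qq eqns_def doubleton_eq_iff)
    have at_j: "- r = \<kappa> * eqn_normal q j"
      using proportional eqn_normal_second[OF False] unfolding pp by metis
    have q_first: "eqn_normal q i' = 1"
      using eqn_normal_first q unfolding qq by blast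
    from same_support False consider "i' = i" "j' = j" | "i' = j" "j' = i"
      by (auto simp: doubleton_eq_iff)
    then show ?thesis
    proof cases
      case 1
      then have "\<kappa> = 1" "r = r'"
        using at_i at_j q_first False by (simp_all add: qq eqn_normal_second)
      then show ?thesis
        using 1 by (simp add: pp qq)
    next
      case 2
      txt \<open>x_i = r x_j and x_j = r' x_i coincide only for r = r' = 1, which is listed once.\<close>
      then have "eqn_normal q i = - r'" "eqn_normal q j = 1"
        using q_first eqn_normal_second[of j i r'] False by (simp_all add: qq)
      then have "r * r' = 1"
        using at_i at_j by (metis minus_mult_minus mult_1_right mult.commute)
      then have "r = 1" "r' = 1"
        using r ge_1_mult_eq_1_imp_eq_1 by blast+
      then have "i < j" "i' < j'"
        using p q False 2 A by (auto simp: pp qq eqns_def)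
      then show ?thesis
        using 2 by simp
    qed
  qed
qed

lemma inj_on_eqn_normal:
  assumes "\<forall>r\<in>A. r > 1"
  shows "inj_on eqn_normal (eqns n A)"
  using proportional_eqn_normals_imp_eq[OF assms, where \<kappa> = 1] by (intro inj_onI) simp

lemma inj_on_eqn_hyperplane:
  assumes "\<forall>r\<in>A. r > 1"
  shows "inj_on (eqn_hyperplane n) (eqns n A)"
proof (intro inj_onI)
  fix p q
  assume p: "p \<in> eqns n A" and q: "q \<in> eqns n A" and "eqn_hyperplane n p = eqn_hyperplane n q"
  then obtain \<kappa> where "\<forall>k. eqn_normal p k = \<kappa> * eqn_normal q k"
    using central_hyperplane_eq_imp_proportional[of "eqn_normal p" n "eqn_normal q" 0]
    by (auto simp: eqn_hyperplane_def eqn_normal_in_Rn)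
  then show "p = q"
    using proportional_eqn_normals_imp_eq[OF assms p q] by blast
qed

lemma normals_eqn_hyperplanes:
  assumes "Q \<subseteq> eqns n A" "v \<in> normals n (eqn_hyperplane n ` Q)"
  shows "\<exists>p\<in>Q. \<exists>\<kappa>. \<kappa> \<noteq> 0 \<and> (\<forall>k. v k = \<kappa> * eqn_normal p k)"
proof -
  obtain i b p where v: "v \<in> Rn n" "v i \<noteq> 0" and
    p: "p \<in> Q" "hyperplane n v b = hyperplane n (eqn_normal p) 0"
    using assms(2) unfolding normals_def eqn_hyperplane_def by blast
  then obtain \<kappa> where "\<forall>k. v k = \<kappa> * eqn_normal p k"
    using central_hyperplane_eq_imp_proportional eqn_normal_in_Rn assms(1) by blast
  then show ?thesis
    using p(1) v(2) by (metis mult_eq_0_iff)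
qed

lemma char_poly_eqn_hyperplanes:
  assumes "inj_on (eqn_hyperplane n) P"
  shows "char_poly n (eqn_hyperplane n ` P) =
    (\<Sum>Q\<in>Pow P. (-1) ^ card Q * monom 1 (n - rank n (eqn_hyperplane n ` Q)))"
proof -
  txt \<open>All hyperplanes are central, so every subarrangement is counted.\<close>
  have "(\<lambda>k. 0) \<in> Rn n \<inter> \<Inter>B" if "B \<subseteq> eqn_hyperplane n ` P" for B
    using that by (auto simp: eqn_hyperplane_def hyperplane_def)
  then have "{B. B \<subseteq> eqn_hyperplane n ` P \<and> Rn n \<inter> \<Inter>B \<noteq> {}} = Pow (eqn_hyperplane n ` P)"
    by blast
  also have "\<dots> = image (eqn_hyperplane n) ` Pow P"
    by (rule image_Pow_surj[symmetric]) simp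
  finally have "char_poly n (eqn_hyperplane n ` P) =
      (\<Sum>B\<in>image (eqn_hyperplane n) ` Pow P. (-1) ^ card B * monom 1 (n - rank n B))"
    unfolding char_poly_def by simp
  also have "\<dots> = (\<Sum>Q\<in>Pow P. (-1) ^ card (eqn_hyperplane n ` Q) *
      monom 1 (n - rank n (eqn_hyperplane n ` Q)))"
    by (simp add: sum.reindex[OF inj_on_image_Pow[OF assms]])
  also have "\<dots> = (\<Sum>Q\<in>Pow P. (-1) ^ card Q * monom 1 (n - rank n (eqn_hyperplane n ` Q)))"
  proof (intro sum.cong refl)
    fix Q
    assume "Q \<in> Pow P"
    then have "card (eqn_hyperplane n ` Q) = card Q"
      using assms by (auto intro: card_image inj_on_subset)
    then show "(-1) ^ card (eqn_hyperplane n ` Q) * monom 1 (n - rank n (eqn_hyperplane n ` Q)) =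
        (-1) ^ card Q * monom 1 (n - rank n (eqn_hyperplane n ` Q))"
      by simp
  qed
  finally show ?thesis .
qed

section \<open>Rank via separated equations\<close>

lemma dot_scaled_eqn_normal_eq_0_iff:
  assumes "p \<in> eqns n A" "\<kappa> \<noteq> 0" "\<forall>k. v k = \<kappa> * eqn_normal p k"
  shows "dot n v x = 0 \<longleftrightarrow> satisfies x p"
proof -
  have "dot n v x = \<kappa> * dot n (eqn_normal p) x"
    using assms(3) by (rule dot_scaled)
  then show ?thesis
    using assms(2) dot_eqn_normal_eq_0_iff[OF assms(1)] by simp
qed

definition separated_eqns :: "nat \<Rightarrow> (nat \<times> nat \<times> real) set \<Rightarrow> bool" where
  "separated_eqns n S \<longleftrightarrow>
     (\<forall>p\<in>S. \<exists>x\<in>Rn n. (\<forall>q\<in>S - {p}. satisfies x q) \<and> \<not> satisfies x p)"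

lemma lin_indep_normals_imp_separated_eqns:
  assumes Q: "Q \<subseteq> eqns n A"
    and T: "T \<subseteq> normals n (eqn_hyperplane n ` Q)" "lin_indep n T"
  shows "\<exists>S\<subseteq>Q. separated_eqns n S \<and> card S = card T"
proof -
  have ex_eqn: "\<forall>v\<in>T. \<exists>p. p \<in> Q \<and> (\<exists>\<kappa>. \<kappa> \<noteq> 0 \<and> (\<forall>k. v k = \<kappa> * eqn_normal p k))"
    using normals_eqn_hyperplanes[OF Q] T(1) by blast
  obtain eqn where eqn: "\<forall>v\<in>T. eqn v \<in> Q \<and>
      (\<exists>\<kappa>. \<kappa> \<noteq> 0 \<and> (\<forall>k. v k = \<kappa> * eqn_normal (eqn v) k))"
    using bchoice[OF ex_eqn] by blast
  have dot_eq_0_iff: "dot n v x = 0 \<longleftrightarrow> satisfies x (eqn v)" if "v \<in> T" for v x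
    using eqn that Q dot_scaled_eqn_normal_eq_0_iff by blast
  have "T \<subseteq> Rn n"
    using T(1) by (auto simp: normals_def)
  then have sep: "separated n T"
    using lin_indep_imp_separated T(2) by blast
  have inj: "inj_on eqn T"
  proof (rule inj_onI, rule ccontr)
    fix v w
    assume v: "v \<in> T" and w: "w \<in> T" and same: "eqn v = eqn w" and "v \<noteq> w"
    then obtain x where "dot n w x = 0" "dot n v x \<noteq> 0"
      using sep unfolding separated_def by blast
    then show False
      using same dot_eq_0_iff[OF v] dot_eq_0_iff[OF w] by simp
  qed
  have "separated_eqns n (eqn ` T)"
    unfolding separated_eqns_def
  proof
    fix p
    assume "p \<in> eqn ` T"
    then obtain v where v: "v \<in> T" "p = eqn v" by blast
    then obtain x where x: "x \<in> Rn n" "\<forall>w\<in>T - {v}. dot n w x = 0" "dot n v x \<noteq> 0"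
      using sep unfolding separated_def by blast
    have "\<forall>q\<in>eqn ` T - {p}. satisfies x q"
      using x(2) v dot_eq_0_iff by auto
    moreover have "\<not> satisfies x p"
      using x(3) v dot_eq_0_iff by simp
    ultimately show "\<exists>x\<in>Rn n. (\<forall>q\<in>eqn ` T - {p}. satisfies x q) \<and> \<not> satisfies x p"
      using x(1) by blast
  qed
  moreover have "eqn ` T \<subseteq> Q" "card (eqn ` T) = card T"
    using eqn card_image[OF inj] by blast+
  ultimately show ?thesis by blast
qed

lemma eqn_normals_subset_normals:
  assumes "S \<subseteq> eqns n A"
  shows "eqn_normal ` S \<subseteq> normals n (eqn_hyperplane n ` S)"
proof
  fix v
  assume "v \<in> eqn_normal ` S"
  then obtain i j r where p: "(i, j, r) \<in> S" "v = eqn_normal (i, j, r)"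
    by auto
  then have ijr: "(i, j, r) \<in> eqns n A"
    using assms by blast
  have "hyperplane n v 0 \<in> eqn_hyperplane n ` S"
    using p by (simp add: eqn_hyperplane_def)
  moreover have "v \<in> Rn n" "i < n" "v i \<noteq> 0"
    using p(2) eqn_normal_in_Rn[OF ijr] eqn_normal_first[OF ijr] eqns_bounds[OF ijr] by simp_all
  ultimately show "v \<in> normals n (eqn_hyperplane n ` S)"
    unfolding normals_def by blast
qed

lemma separated_eqns_imp_lin_indep_normals:
  assumes S: "S \<subseteq> eqns n A" "finite S" "separated_eqns n S"
  shows "lin_indep n (eqn_normal ` S)"
proof -
  have "separated n (eqn_normal ` S)"
    unfolding separated_def
  proof
    fix v
    assume "v \<in> eqn_normal ` S"
    then obtain p where p: "p \<in> S" "v = eqn_normal p" by blast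
    then obtain x where x: "x \<in> Rn n" "\<forall>q\<in>S - {p}. satisfies x q" "\<not> satisfies x p"
      using S(3) unfolding separated_eqns_def by blast
    have dot_eq_0_iff: "dot n (eqn_normal q) x = 0 \<longleftrightarrow> satisfies x q" if "q \<in> S" for q
      using that S(1) dot_eqn_normal_eq_0_iff by blast
    have "\<forall>w\<in>eqn_normal ` S - {v}. dot n w x = 0"
      using x(2) p(2) dot_eq_0_iff by auto
    moreover have "dot n v x \<noteq> 0"
      using x(3) p dot_eq_0_iff by simp
    ultimately show "\<exists>x\<in>Rn n. (\<forall>w\<in>eqn_normal ` S - {v}. dot n w x = 0) \<and> dot n v x \<noteq> 0"
      using x(1) by blast
  qed
  then show ?thesis
    using separated_imp_lin_indep S(2) by blast
qed

lemma rank_eqn_hyperplanes: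
  assumes A: "\<forall>r\<in>A. r > 1" and Q: "Q \<subseteq> eqns n A" "finite Q"
  shows "rank n (eqn_hyperplane n ` Q) = Max (card ` {S. S \<subseteq> Q \<and> separated_eqns n S})"
proof -
  have "{card T | T. T \<subseteq> normals n (eqn_hyperplane n ` Q) \<and> lin_indep n T}
      = {card S | S. S \<subseteq> Q \<and> separated_eqns n S}"
  proof (intro equalityI subsetI)
    fix k
    assume "k \<in> {card T | T. T \<subseteq> normals n (eqn_hyperplane n ` Q) \<and> lin_indep n T}"
    then obtain T where "k = card T" "T \<subseteq> normals n (eqn_hyperplane n ` Q)" "lin_indep n T"
      by blast
    then obtain S where "S \<subseteq> Q" "separated_eqns n S" "k = card S"
      using lin_indep_normals_imp_separated_eqns[OF Q(1)] by metis
    then show "k \<in> {card S | S. S \<subseteq> Q \<and> separated_eqns n S}"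
      by blast
  next
    fix k
    assume "k \<in> {card S | S. S \<subseteq> Q \<and> separated_eqns n S}"
    then obtain S where S: "k = card S" "S \<subseteq> Q" "separated_eqns n S"
      by blast
    have S_eqns: "S \<subseteq> eqns n A" "finite S"
      using S(2) Q finite_subset by blast+
    have "lin_indep n (eqn_normal ` S)"
      using separated_eqns_imp_lin_indep_normals[OF S_eqns S(3)] .
    moreover have "normals n (eqn_hyperplane n ` S) \<subseteq> normals n (eqn_hyperplane n ` Q)"
      using S(2) by (auto simp: normals_def)
    then have "eqn_normal ` S \<subseteq> normals n (eqn_hyperplane n ` Q)"
      using eqn_normals_subset_normals[OF S_eqns(1)] by blast
    moreover have "card (eqn_normal ` S) = k"
      using inj_on_subset[OF inj_on_eqn_normal[OF A] S_eqns(1)] S(1) by (simp add: card_image)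
    ultimately show "k \<in> {card T | T. T \<subseteq> normals n (eqn_hyperplane n ` Q) \<and> lin_indep n T}"
      by blast
  qed
  then show ?thesis
    unfolding rank_def image_Collect by simp
qed

section \<open>Transporting coefficients along a bijection\<close>

definition powprod :: "(real \<Rightarrow> real) \<Rightarrow> real set \<Rightarrow> (real \<Rightarrow> int) \<Rightarrow> real" where
  "powprod f A e = (\<Prod>r\<in>A. f r powi e r)"

lemma powprod_add:
  "\<forall>r\<in>A. f r \<noteq> 0 \<Longrightarrow> powprod f A (\<lambda>r. e1 r + e2 r) = powprod f A e1 * powprod f A e2"
  unfolding powprod_def by (simp add: power_int_add prod.distrib[symmetric] cong: prod.cong)

lemma powprod_pos: "\<forall>r\<in>A. f r > 0 \<Longrightarrow> powprod f A e > 0"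
  unfolding powprod_def by (simp add: prod_pos)

lemma powprod_cong: "\<forall>r\<in>A. e1 r = e2 r \<Longrightarrow> powprod f A e1 = powprod f A e2"
  unfolding powprod_def by simp

lemma powprod_shift:
  assumes "finite A" "r0 \<in> A" "\<forall>r\<in>A. f r \<noteq> 0"
  shows "powprod f A (\<lambda>r. e r + (if r = r0 then 1 else 0)) = f r0 * powprod f A e"
proof -
  have "powprod f A (\<lambda>r. if r = r0 then 1 else 0) = (\<Prod>r\<in>A. if r = r0 then f r else 1)"
    unfolding powprod_def by (intro prod.cong) auto
  then show ?thesis
    using assms by (simp add: powprod_add prod.delta)
qed

lemma powprod_eq_imp_eq:
  assumes inj: "inj_on f A" and pos: "\<forall>r\<in>A. f r > 0" and indep: "mult_indep (f ` A)"
    and eq: "powprod f A e1 = powprod f A e2" and r: "r \<in> A"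
  shows "e1 r = e2 r"
proof -
  define d where "d r = e1 r - e2 r" for r
  have "\<forall>r\<in>A. f r \<noteq> 0"
    using pos by auto
  then have "powprod f A d * powprod f A e2 = powprod f A e1"
    using powprod_add[of A f d e2] by (simp add: d_def)
  then have "powprod f A d = 1"
    using eq powprod_pos[OF pos, of e2] by simp
  moreover have "powprod f A d = (\<Prod>r'\<in>f ` A. r' powi d (the_inv_into A f r'))"
    unfolding powprod_def using inj by (simp add: prod.reindex the_inv_into_f_f)
  ultimately have "\<forall>r'\<in>f ` A. d (the_inv_into A f r') = 0"
    using indep unfolding mult_indep_def by presburger
  then show ?thesis
    using r inj by (simp add: the_inv_into_f_f d_def)
qed

definition eqn_map :: "(real \<Rightarrow> real) \<Rightarrow> nat \<times> nat \<times> real \<Rightarrow> nat \<times> nat \<times> real" where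
  "eqn_map s = (\<lambda>(i, j, r). (i, j, s r))"

lemma finite_eqns: "finite A \<Longrightarrow> finite (eqns n A)"
  by (rule finite_subset[of _ "{..<n} \<times> {..<n} \<times> ({0, 1} \<union> A)"]) (auto simp: eqns_def)

text \<open>s fixes 0 and 1 so that it acts on every coefficient r of an equation x_i = r x_j.\<close>
locale mult_indep_bij =
  fixes A A' :: "real set" and s :: "real \<Rightarrow> real"
  assumes finite_A: "finite A"
    and A_gt_1: "\<forall>r\<in>A. r > 1" and A'_gt_1: "\<forall>r\<in>A'. r > 1"
    and mult_indep_A: "mult_indep A" and mult_indep_A': "mult_indep A'"
    and bij: "bij_betw s A A'" and s_0: "s 0 = 0" and s_1: "s 1 = 1"
begin

abbreviation mon :: "(real \<Rightarrow> int) \<Rightarrow> real" where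
  "mon \<equiv> powprod (\<lambda>r. r) A"

abbreviation mon' :: "(real \<Rightarrow> int) \<Rightarrow> real" where
  "mon' \<equiv> powprod s A"

lemma s_gt_1: "r \<in> A \<Longrightarrow> s r > 1"
  using bij A'_gt_1 by (auto simp: bij_betw_def)

lemma mon_pos: "mon e > 0"
  using A_gt_1 by (intro powprod_pos) auto

lemma mon'_pos: "mon' e > 0"
  using s_gt_1 by (intro powprod_pos) fastforce

lemma mon_shift: "r \<in> A \<Longrightarrow> mon (\<lambda>x. e x + (if x = r then 1 else 0)) = r * mon e"
  using finite_A A_gt_1 by (intro powprod_shift) auto

lemma mon'_shift: "r \<in> A \<Longrightarrow> mon' (\<lambda>x. e x + (if x = r then 1 else 0)) = s r * mon' e"
  using finite_A s_gt_1 by (intro powprod_shift) fastforce+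

lemma mon_eq_imp_eq: "mon e1 = mon e2 \<Longrightarrow> r \<in> A \<Longrightarrow> e1 r = e2 r"
  using A_gt_1 mult_indep_A by (intro powprod_eq_imp_eq[of "\<lambda>r. r"]) auto

lemma mon'_eq_imp_eq: "mon' e1 = mon' e2 \<Longrightarrow> r \<in> A \<Longrightarrow> e1 r = e2 r"
  using s_gt_1 mult_indep_A' bij
  by (intro powprod_eq_imp_eq[of s]) (fastforce simp: bij_betw_def)+

text \<open>Since A is multiplicatively independent, every nonzero t is uniquely rho * mon e with
  rho a fixed representative of the coset of t modulo the group generated by A.\<close>
definition coset_rep :: "real \<Rightarrow> real" where
  "coset_rep t = (SOME \<rho>. \<exists>e. t = \<rho> * mon e)"

definition coset_exp :: "real \<Rightarrow> real \<Rightarrow> int" where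
  "coset_exp t = (SOME e. t = coset_rep t * mon e)"

lemma coset_decomp: "t = coset_rep t * mon (coset_exp t)"
proof -
  have "\<exists>e. t = t * mon e"
    by (rule exI[of _ "\<lambda>r. 0"]) (simp add: powprod_def)
  then have "\<exists>\<rho> e. t = \<rho> * mon e"
    by blast
  then have "\<exists>e. t = coset_rep t * mon e"
    unfolding coset_rep_def by (rule someI_ex)
  then show ?thesis
    unfolding coset_exp_def by (rule someI_ex)
qed

lemma coset_rep_eq_0_iff: "coset_rep t = 0 \<longleftrightarrow> t = 0"
  using coset_decomp[of t] mon_pos[of "coset_exp t"] by (metis mult_eq_0_iff less_irrefl)

lemma coset_rep_mult:
  assumes "r \<in> A"
  shows "coset_rep (r * t) = coset_rep t"
proof -
  have "r \<noteq> 0"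
    using assms A_gt_1 by auto
  have "(\<exists>e. r * t = \<rho> * mon e) \<longleftrightarrow> (\<exists>e. t = \<rho> * mon e)" for \<rho>
  proof
    assume "\<exists>e. r * t = \<rho> * mon e"
    then obtain e where e: "r * t = \<rho> * mon e" by blast
    have "mon e = r * mon (\<lambda>x. e x - (if x = r then 1 else 0))"
      using mon_shift[OF assms, of "\<lambda>x. e x - (if x = r then 1 else 0)"] by simp
    then have "r * t = r * (\<rho> * mon (\<lambda>x. e x - (if x = r then 1 else 0)))"
      using e by (simp add: algebra_simps)
    then have "t = \<rho> * mon (\<lambda>x. e x - (if x = r then 1 else 0))"
      using \<open>r \<noteq> 0\<close> by simp
    then show "\<exists>e. t = \<rho> * mon e" by blast
  next
    assume "\<exists>e. t = \<rho> * mon e"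
    then obtain e where "t = \<rho> * mon e" by blast
    then have "r * t = \<rho> * mon (\<lambda>x. e x + (if x = r then 1 else 0))"
      by (simp add: mon_shift[OF assms])
    then show "\<exists>e. r * t = \<rho> * mon e" by blast
  qed
  then show ?thesis
    unfolding coset_rep_def by simp
qed

lemma mon'_coset_exp_mult:
  assumes r: "r \<in> A" and t: "t \<noteq> 0"
  shows "mon' (coset_exp (r * t)) = s r * mon' (coset_exp t)"
proof -
  let ?e = "\<lambda>x. coset_exp t x + (if x = r then 1 else 0)"
  have "coset_rep t * mon (coset_exp (r * t)) = r * t"
    using coset_decomp[of "r * t"] by (simp add: coset_rep_mult[OF r])
  also have "\<dots> = coset_rep t * mon ?e"
    using coset_decomp[of t] by (simp add: mon_shift[OF r] algebra_simps)
  finally have "mon (coset_exp (r * t)) = mon ?e"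
    using t coset_rep_eq_0_iff by simp
  then have "mon' (coset_exp (r * t)) = mon' ?e"
    using mon_eq_imp_eq by (intro powprod_cong) blast
  then show ?thesis
    by (simp add: mon'_shift[OF r])
qed

definition rebase :: "real \<Rightarrow> real" where
  "rebase t = coset_rep t * mon' (coset_exp t)"

definition compatible :: "(real \<Rightarrow> real) \<Rightarrow> bool" where
  "compatible \<psi> \<longleftrightarrow> (\<forall>r\<in>{0, 1} \<union> A. \<forall>t. \<psi> (r * t) = s r * \<psi> t)"

lemma compatible_0:
  assumes "compatible \<psi>"
  shows "\<psi> 0 = 0"
proof -
  have "\<psi> (0 * 0) = s 0 * \<psi> 0"
    using assms unfolding compatible_def by blast
  then show ?thesis
    by (simp add: s_0)
qed

lemma rebase_eq_0_iff: "rebase t = 0 \<longleftrightarrow> t = 0"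
  using coset_rep_eq_0_iff mon'_pos[of "coset_exp t"] by (simp add: rebase_def)

lemma compatible_rebase: "compatible rebase"
  unfolding compatible_def
proof (intro ballI allI)
  fix r t :: real
  assume "r \<in> {0, 1} \<union> A"
  then consider "r = 0" | "r = 1" | "r \<in> A" "t \<noteq> 0" | "t = 0"
    by auto
  then show "rebase (r * t) = s r * rebase t"
  proof cases
    case 3
    then show ?thesis
      by (simp add: rebase_def coset_rep_mult mon'_coset_exp_mult)
  qed (simp_all add: rebase_eq_0_iff s_0 s_1)
qed

lemma rebase_inj_on_coset:
  assumes rep: "coset_rep u = coset_rep v" and "rebase u = rebase v"
  shows "u = v"
proof (cases "coset_rep u = 0")
  case False
  then have "mon' (coset_exp u) = mon' (coset_exp v)"
    using assms by (simp add: rebase_def)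
  then have "mon (coset_exp u) = mon (coset_exp v)"
    using mon'_eq_imp_eq by (intro powprod_cong) blast
  then have "coset_rep u * mon (coset_exp u) = coset_rep v * mon (coset_exp v)"
    using rep by simp
  then show ?thesis
    using coset_decomp[of u] coset_decomp[of v] by simp
qed (use rep coset_rep_eq_0_iff[of u] coset_rep_eq_0_iff[of v] in simp)

definition double_on_coset :: "real \<Rightarrow> (real \<Rightarrow> real) \<Rightarrow> real \<Rightarrow> real" where
  "double_on_coset c \<psi> t = (if coset_rep t = c then 2 else 1) * \<psi> t"

lemma compatible_double_on_coset:
  assumes "compatible \<psi>"
  shows "compatible (double_on_coset c \<psi>)"
  unfolding compatible_def
proof (intro ballI allI)
  fix r t :: real
  assume "r \<in> {0, 1} \<union> A"
  then consider "r = 0" | "r = 1" | "r \<in> A"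
    by auto
  then show "double_on_coset c \<psi> (r * t) = s r * double_on_coset c \<psi> t"
    using assms compatible_0[OF assms] unfolding compatible_def double_on_coset_def
    by cases (auto simp: s_0 coset_rep_mult)
qed

lemma compatible_separating:
  assumes "x \<noteq> y"
  shows "\<exists>\<psi>. compatible \<psi> \<and> \<psi> x \<noteq> \<psi> y"
proof (cases "coset_rep x = coset_rep y \<or> rebase x \<noteq> rebase y")
  case True
  then show ?thesis
    using assms rebase_inj_on_coset compatible_rebase by blast
next
  case False
  txt \<open>Distinct cosets with equal images: doubling on the coset of x separates them.\<close>
  then have "x \<noteq> 0" "y \<noteq> 0"
    using assms rebase_eq_0_iff[of x] rebase_eq_0_iff[of y] by auto
  then have "double_on_coset (coset_rep x) rebase x \<noteq> double_on_coset (coset_rep x) rebase y"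
    using False rebase_eq_0_iff by (simp add: double_on_coset_def)
  then show ?thesis
    using compatible_double_on_coset[OF compatible_rebase] by blast
qed

lemma eqn_coeff: "(i, j, r) \<in> eqns n A \<Longrightarrow> r \<in> {0, 1} \<union> A"
  by (auto simp: eqns_def)

lemma eqn_map_in_eqns:
  assumes "p \<in> eqns n A"
  shows "eqn_map s p \<in> eqns n A'"
proof -
  obtain i j r where p: "p = (i, j, r)"
    by (cases p)
  have "r \<in> A \<Longrightarrow> s r \<in> A'"
    using bij bij_betwE by blast
  then show ?thesis
    using assms s_0 s_1 unfolding p eqns_def eqn_map_def by auto
qed

lemma s_inj:
  assumes "r \<in> {0, 1} \<union> A" "r' \<in> {0, 1} \<union> A" "s r = s r'"
  shows "r = r'"
proof -
  have "r \<in> A \<Longrightarrow> r' \<in> A \<Longrightarrow> r = r'"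
    using bij assms(3) by (auto dest: bij_betw_imp_inj_on inj_onD)
  then show ?thesis
    using assms s_gt_1 A_gt_1 s_0 s_1 by fastforce
qed

lemma inj_on_eqn_map: "inj_on (eqn_map s) (eqns n A)"
proof (rule inj_onI)
  fix p q
  assume p: "p \<in> eqns n A" and q: "q \<in> eqns n A" and eq: "eqn_map s p = eqn_map s q"
  obtain i j r where ijr: "p = (i, j, r)"
    by (cases p)
  obtain i' j' r' where ijr': "q = (i', j', r')"
    by (cases q)
  then have "i = i'" "j = j'" "s r = s r'"
    using eq by (simp_all add: ijr ijr' eqn_map_def)
  moreover have "r = r'"
    using s_inj[OF eqn_coeff eqn_coeff] p q \<open>s r = s r'\<close> unfolding ijr ijr' by simp
  ultimately show "p = q"
    using ijr ijr' by simp
qed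

lemma compatible_satisfies:
  assumes \<psi>: "compatible \<psi>" and p: "p \<in> eqns n A" and x: "satisfies x p"
  shows "satisfies (\<lambda>k. \<psi> (x k)) (eqn_map s p)"
proof -
  obtain i j r where ijr: "p = (i, j, r)"
    by (cases p)
  then have "\<psi> (x i) = \<psi> (r * x j)"
    using x by (simp add: satisfies_def)
  also have "\<dots> = s r * \<psi> (x j)"
    using \<psi> eqn_coeff p unfolding compatible_def ijr by blast
  finally show ?thesis
    by (simp add: ijr satisfies_def eqn_map_def)
qed

lemma separated_eqns_map:
  assumes S: "S \<subseteq> eqns n A" "separated_eqns n S"
  shows "separated_eqns n (eqn_map s ` S)"
  unfolding separated_eqns_def
proof
  fix p'
  assume "p' \<in> eqn_map s ` S"
  then obtain p where p: "p \<in> S" "p' = eqn_map s p" by blast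
  obtain i j r where ijr: "p = (i, j, r)" by (cases p)
  obtain x where x: "x \<in> Rn n" "\<forall>q\<in>S - {p}. satisfies x q" "\<not> satisfies x p"
    using S(2) p(1) unfolding separated_eqns_def by blast
  then have "x i \<noteq> r * x j"
    by (simp add: ijr satisfies_def)
  then obtain \<psi> where \<psi>: "compatible \<psi>" "\<psi> (x i) \<noteq> \<psi> (r * x j)"
    using compatible_separating by blast
  have "r \<in> {0, 1} \<union> A"
    using p(1) S(1) by (auto simp: ijr eqns_def)
  then have "\<not> satisfies (\<lambda>k. \<psi> (x k)) p'"
    using \<psi> by (auto simp: p(2) ijr satisfies_def eqn_map_def compatible_def)
  moreover have "\<forall>q'\<in>eqn_map s ` S - {p'}. satisfies (\<lambda>k. \<psi> (x k)) q'"
    using x(2) p S(1) compatible_satisfies[OF \<psi>(1)] by blast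
  moreover have "(\<lambda>k. \<psi> (x k)) \<in> Rn n"
    using x(1) compatible_0[OF \<psi>(1)] by (simp add: Rn_def)
  ultimately show "\<exists>x\<in>Rn n. (\<forall>q'\<in>eqn_map s ` S - {p'}. satisfies x q') \<and> \<not> satisfies x p'"
    by blast
qed

end

context mult_indep_bij
begin

definition s_inv :: "real \<Rightarrow> real" where
  "s_inv r = (if r \<in> A' then the_inv_into A s r else r)"

lemma s_inv_s:
  assumes "r \<in> {0, 1} \<union> A"
  shows "s_inv (s r) = r"
proof (cases "r \<in> A")
  case True
  then show ?thesis
    using bij bij_betwE by (fastforce simp: s_inv_def bij_betw_def the_inv_into_f_f)
next
  case False
  then have "r = 0 \<or> r = 1"
    using assms by blast
  then show ?thesis
    using A'_gt_1 s_0 s_1 by (auto simp: s_inv_def)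
qed

lemma s_s_inv: "r \<in> {0, 1} \<union> A' \<Longrightarrow> s (s_inv r) = r"
  using bij A'_gt_1 s_0 s_1
  by (auto simp: s_inv_def f_the_inv_into_f_bij_betw)

lemma mult_indep_bij_inverse: "mult_indep_bij A' A s_inv"
proof
  show "finite A'"
    using bij finite_A bij_betw_finite by blast
  have "bij_betw (the_inv_into A s) A' A"
    using bij by (rule bij_betw_the_inv_into)
  then show "bij_betw s_inv A' A"
    by (rule bij_betw_cong[THEN iffD1, rotated]) (simp add: s_inv_def)
  show "s_inv 0 = 0" "s_inv 1 = 1"
    using A'_gt_1 by (auto simp: s_inv_def)
qed (use A_gt_1 A'_gt_1 mult_indep_A mult_indep_A' in auto)

lemma bij_betw_eqn_map: "bij_betw (eqn_map s) (eqns n A) (eqns n A')"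
proof (rule bij_betw_imageI[OF inj_on_eqn_map equalityI])
  show "eqn_map s ` eqns n A \<subseteq> eqns n A'"
    using eqn_map_in_eqns by blast
  show "eqns n A' \<subseteq> eqn_map s ` eqns n A"
  proof
    fix p'
    assume p': "p' \<in> eqns n A'"
    interpret inv: mult_indep_bij A' A s_inv
      by (rule mult_indep_bij_inverse)
    obtain i j r where ijr: "p' = (i, j, r)"
      by (cases p')
    then have "eqn_map s (eqn_map s_inv p') = p'"
      using s_s_inv inv.eqn_coeff p' by (simp add: eqn_map_def)
    then show "p' \<in> eqn_map s ` eqns n A"
      using inv.eqn_map_in_eqns[OF p'] by (metis image_eqI)
  qed
qed

lemma card_separated_eqns_subset_map:
  assumes Q: "Q \<subseteq> eqns n A"
  shows "card ` {S. S \<subseteq> Q \<and> separated_eqns n S}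
    \<subseteq> card ` {S'. S' \<subseteq> eqn_map s ` Q \<and> separated_eqns n S'}"
proof (rule image_subsetI)
  fix S
  assume "S \<in> {S. S \<subseteq> Q \<and> separated_eqns n S}"
  then have S: "S \<subseteq> Q" "separated_eqns n S"
    by simp_all
  have "eqn_map s ` S \<subseteq> eqn_map s ` Q"
    using S(1) by blast
  moreover have "S \<subseteq> eqns n A"
    using S(1) Q by blast
  then have "separated_eqns n (eqn_map s ` S)" "inj_on (eqn_map s) S"
    using separated_eqns_map S(2) inj_on_eqn_map inj_on_subset by blast+
  ultimately show "card S \<in> card ` {S'. S' \<subseteq> eqn_map s ` Q \<and> separated_eqns n S'}"
    by (intro rev_image_eqI[of "eqn_map s ` S"]) (simp_all add: card_image)
qed

lemma eqn_map_s_inv_eqn_map: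
  assumes "p \<in> eqns n A"
  shows "eqn_map s_inv (eqn_map s p) = p"
proof -
  obtain i j r where "p = (i, j, r)"
    by (cases p)
  then show ?thesis
    using assms s_inv_s eqn_coeff by (simp add: eqn_map_def)
qed

lemma rank_eqn_map:
  assumes Q: "Q \<subseteq> eqns n A"
  shows "rank n (eqn_hyperplane n ` eqn_map s ` Q) = rank n (eqn_hyperplane n ` Q)"
proof -
  interpret inv: mult_indep_bij A' A s_inv
    by (rule mult_indep_bij_inverse)
  have Q': "eqn_map s ` Q \<subseteq> eqns n A'"
    using Q eqn_map_in_eqns by blast
  have finite_Q: "finite Q"
    using Q finite_eqns[OF finite_A] finite_subset by blast
  have "eqn_map s_inv ` eqn_map s ` Q = Q"
    using Q eqn_map_s_inv_eqn_map by (force simp: image_image)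
  then have "card ` {S'. S' \<subseteq> eqn_map s ` Q \<and> separated_eqns n S'}
      = card ` {S. S \<subseteq> Q \<and> separated_eqns n S}"
    using card_separated_eqns_subset_map[OF Q] inv.card_separated_eqns_subset_map[OF Q']
    by (intro subset_antisym) simp_all
  then show ?thesis
    using rank_eqn_hyperplanes[OF A'_gt_1 Q'] rank_eqn_hyperplanes[OF A_gt_1 Q finite_Q]
      finite_Q by simp
qed

lemma char_poly_arr_eq: "char_poly n (arr n A) = char_poly n (arr n A')"
proof -
  let ?summand = "\<lambda>Q. (-1) ^ card Q * monom 1 (n - rank n (eqn_hyperplane n ` Q))"
  have bij_Pow: "bij_betw (image (eqn_map s)) (Pow (eqns n A)) (Pow (eqns n A'))"
    using bij_betw_eqn_map by (rule bij_betw_image_Pow)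
  have "char_poly n (arr n A) = (\<Sum>Q\<in>Pow (eqns n A). ?summand Q)"
    unfolding arr_eq_eqn_hyperplanes
    using char_poly_eqn_hyperplanes inj_on_eqn_hyperplane[OF A_gt_1] by blast
  also have "\<dots> = (\<Sum>Q\<in>Pow (eqns n A). ?summand (eqn_map s ` Q))"
  proof (rule sum.cong[OF refl])
    fix Q
    assume "Q \<in> Pow (eqns n A)"
    then have "inj_on (eqn_map s) Q" "Q \<subseteq> eqns n A"
      using inj_on_eqn_map inj_on_subset by blast+
    then show "?summand Q = ?summand (eqn_map s ` Q)"
      by (simp add: card_image rank_eqn_map)
  qed
  also have "\<dots> = (\<Sum>Q'\<in>Pow (eqns n A'). ?summand Q')"
    using bij_Pow by (rule sum.reindex_bij_betw)
  also have "\<dots> = char_poly n (arr n A')"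
    unfolding arr_eq_eqn_hyperplanes
    using char_poly_eqn_hyperplanes inj_on_eqn_hyperplane[OF A'_gt_1] by simp
  finally show ?thesis .
qed

end

theorem theorem2p1:
  fixes m n :: nat and a a' :: "nat set"
  assumes "m \<ge> 1"
    and "finite a" "card a = m" "finite a'" "card a' = m"
    and "\<forall>r\<in>a. r > 0 \<and> r \<noteq> 1" "\<forall>r\<in>a'. r > 0 \<and> r \<noteq> 1"
    and "mult_indep (real ` a)" "mult_indep (real ` a')"
  shows "char_poly n (arr n (real ` a)) = char_poly n (arr n (real ` a'))"
proof -
  have "card (real ` a) = card (real ` a')"
    using assms(3,5) by (simp add: card_image)
  then obtain h where h: "bij_betw h (real ` a) (real ` a')"
    using finite_same_card_bij assms(2,4) by blast
  have gt_1: "\<forall>r\<in>real ` a. r > 1" "\<forall>r\<in>real ` a'. r > 1"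
    using assms(6,7) by force+
  define s where "s r = (if r \<in> real ` a then h r else r)" for r
  have "bij_betw s (real ` a) (real ` a')"
    using h by (rule bij_betw_cong[THEN iffD1, rotated]) (simp add: s_def)
  moreover have "s 0 = 0" "s 1 = 1"
    using gt_1 by (auto simp: s_def)
  ultimately interpret mult_indep_bij "real ` a" "real ` a'" s
    using assms(2,8,9) gt_1 by unfold_locales auto
  show ?thesis
    by (rule char_poly_arr_eq)
qed

end
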